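(* Let $G$ be a subgroup of $\mathrm{GL}_n(\mathbb{R})$ containing $\mathrm{SO}_n(\mathbb{R})$. Then there exists a subgroup $H$ of $(\mathbb{R}^*, \times)$ such that $G$ equals either $\mathrm{SO}_n(\mathbb{R}) \rtimes H$ or $\mathrm{SL}_n(\mathbb{R}) \rtimes H$. Moreover, if $G$ is closed, then $H$ is closed.
   Context: One writes $\mathrm{GL}_n(\mathbb{R}) = \mathrm{SL}_n(\mathbb{R}) \rtimes \mathbb{R}^*$, where $\mathbb{R}^*$ is embedded in $\mathrm{GL}_n(\mathbb{R})$ via the injective homomorphism $x \mapsto |x|^{1/n}\,\mathrm{Diag}(\mathrm{sgn}(x), 1, \ldots, 1)$; for a subgroup $H \subset \mathbb{R}^*$, $K \rtimes H$ (with $K = \mathrm{SO}_n(\mathbb{R})$ or $\mathrm{SL}_n(\mathbb{R})$) denotes the subgroup of $\mathrm{GL}_n(\mathbb{R})$ consisting of products $k\,|x|^{1/n}\mathrm{Diag}(\mathrm{sgn}(x),1,\ldots,1)$ with $k \in K$, $x \in H$. Here $\mathrm{Diag}(a_1,\ldots,a_n)$ is the diagonal matrix with entries $a_1,\ldots,a_n$ and $\mathrm{sgn}$ is the sign function. *)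

theory Defs
  imports "HOL-Analysis.Analysis"
begin

text \<open>Matrices in M_n(R) are elements of real^'n^'n; the index type 'n is finite
  with n = CARD('n); its well-order supplies the "first" coordinate.\<close>

definition GLn :: "(real^('n::finite)^('n::finite)) set" where
  "GLn = {A. invertible A}"

definition SLn :: "(real^('n::finite)^('n::finite)) set" where
  "SLn = {A. det A = 1}"

definition SOn :: "(real^('n::finite)^('n::finite)) set" where
  "SOn = {A. orthogonal_matrix A \<and> det A = 1}"

definition first_index :: "'n::{finite,wellorder}" where
  "first_index = (LEAST i. True)"

definition emb :: "real \<Rightarrow> real^('n::{finite,wellorder})^('n::{finite,wellorder})" where
  "emb x = (\<chi> i j. if i = j then
              (if i = (first_index::'n::{finite,wellorder}) then sgn x else 1) * \<bar>x\<bar> powr (1 / real CARD('n::{finite,wellorder}))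
            else 0)"

definition semidir :: "(real^('n::{finite,wellorder})^('n::{finite,wellorder})) set \<Rightarrow> real set \<Rightarrow> (real^('n::{finite,wellorder})^('n::{finite,wellorder})) set" where
  "semidir K H = {k ** emb x | k x. k \<in> K \<and> x \<in> H}"

definition is_subgroup_GL :: "(real^('n::finite)^('n::finite)) set \<Rightarrow> bool" where
  "is_subgroup_GL G \<longleftrightarrow> G \<subseteq> GLn \<and> mat 1 \<in> G \<and>
     (\<forall>A\<in>G. \<forall>B\<in>G. A ** B \<in> G) \<and> (\<forall>A\<in>G. matrix_inv A \<in> G)"

definition is_subgroup_Rstar :: "real set \<Rightarrow> bool" where
  "is_subgroup_Rstar H \<longleftrightarrow> H \<subseteq> - {0} \<and> 1 \<in> H \<and>
     (\<forall>x\<in>H. \<forall>y\<in>H. x * y \<in> H) \<and> (\<forall>x\<in>H. inverse x \<in> H)"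

end

theory Submission
  imports Defs
begin

text \<open>Let \<open>H = {x \<noteq> 0. emb x \<in> G}\<close>. If every element of \<open>G\<close> is conformal, i.e. a positive multiple
  of an orthogonal matrix, then each \<open>g \<in> G\<close> factors as \<open>k \<cdot> emb (det g)\<close> with \<open>k \<in> SO\<^sub>n\<close>, so
  \<open>G = semidir SOn H\<close>. Otherwise some \<open>g \<in> G\<close> stretches a unit vector \<open>x\<close> more than another one
  \<open>y\<close>; taking \<open>x\<close> and \<open>y\<close> extremal, \<open>g\<close> conjugates a quarter turn into a quarter turn composed
  with a dilation \<open>diag (r, 1/r)\<close>, \<open>r \<noteq> 1\<close>, of some plane. Products of this dilation with rotations
  realise every \<open>2 \<times> 2\<close> matrix of determinant one whose singular values are close to 1, in
  particular all small shears of that plane, hence all shears of all planes, all transvections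
  and all unimodular diagonal matrices. These generate \<open>SL\<^sub>n\<close>, so \<open>G = semidir SLn H\<close>. Closedness of
  \<open>H\<close> follows from the continuity of \<open>emb\<close>.\<close>

lemma matrix_inv_right: "invertible A \<Longrightarrow> A ** matrix_inv A = mat 1"
  unfolding invertible_def matrix_inv_def by (rule someI2_ex) auto

lemma matrix_inv_left: "invertible A \<Longrightarrow> matrix_inv A ** A = mat 1"
  unfolding invertible_def matrix_inv_def by (rule someI2_ex) auto

lemma matrix_inv_unique:
  fixes A B :: "real^'n^'n"
  assumes "A ** B = mat 1"
  shows "matrix_inv A = B"
proof -
  have "invertible A"
    using assms invertible_right_inverse by blast
  have "matrix_inv A = matrix_inv A ** (A ** B)"
    using assms by simp
  also have "\<dots> = (matrix_inv A ** A) ** B"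
    by (simp add: matrix_mul_assoc)
  finally show ?thesis
    using \<open>invertible A\<close> by (simp add: matrix_inv_left)
qed

section \<open>Matrices acting on a plane\<close>

definition outer_prod :: "real^'n \<Rightarrow> real^'n \<Rightarrow> real^'n^'n" where
  "outer_prod x y = (\<chi> i j. x$i * y$j)"

lemma outer_prod_mult_vec: "outer_prod x y *v w = (y \<bullet> w) *\<^sub>R x"
  by (simp add: outer_prod_def matrix_vector_mult_def inner_vec_def vec_eq_iff
      sum_distrib_left mult_ac)

definition orthonormal_pair :: "real^'n \<Rightarrow> real^'n \<Rightarrow> bool" where
  "orthonormal_pair u v \<longleftrightarrow> u \<bullet> u = 1 \<and> v \<bullet> v = 1 \<and> u \<bullet> v = 0"

text \<open>For an orthonormal pair \<open>u, v\<close>, \<open>plane_matrix u v a b c d\<close> acts on the plane spanned by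
  \<open>u, v\<close> as the \<open>2 \<times> 2\<close> matrix with rows \<open>(a, b)\<close> and \<open>(c, d)\<close> in the basis \<open>u, v\<close>, and as the
  identity on the orthogonal complement.\<close>

definition plane_matrix :: "real^'n \<Rightarrow> real^'n \<Rightarrow> real \<Rightarrow> real \<Rightarrow> real \<Rightarrow> real \<Rightarrow> real^'n^'n" where
  "plane_matrix u v a b c d = mat 1 + (a - 1) *\<^sub>R outer_prod u u + b *\<^sub>R outer_prod u v
     + c *\<^sub>R outer_prod v u + (d - 1) *\<^sub>R outer_prod v v"

lemma plane_matrix_mult_vec:
  "plane_matrix u v a b c d *v w
     = w + ((a - 1) * (u \<bullet> w) + b * (v \<bullet> w)) *\<^sub>R u + (c * (u \<bullet> w) + (d - 1) * (v \<bullet> w)) *\<^sub>R v"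
  by (simp add: plane_matrix_def outer_prod_mult_vec
      scaleR_matrix_vector_assoc[symmetric] algebra_simps)

lemma plane_matrix_component:
  "plane_matrix u v a b c d $ i $ j = of_bool (i = j) + (a - 1) * (u$i * u$j) + b * (u$i * v$j)
     + c * (v$i * u$j) + (d - 1) * (v$i * v$j)"
  by (simp add: plane_matrix_def outer_prod_def mat_def)

lemma plane_matrix_mult:
  fixes u v :: "real^'n"
  assumes "orthonormal_pair u v"
  shows "plane_matrix u v a b c d ** plane_matrix u v a' b' c' d'
           = plane_matrix u v (a*a' + b*c') (a*b' + b*d') (c*a' + d*c') (c*b' + d*d')"
proof (rule iffD2[OF matrix_eq], rule allI)
  fix w :: "real^'n"
  have uv: "u \<bullet> u = 1" "v \<bullet> v = 1" "u \<bullet> v = 0" "v \<bullet> u = 0"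
    using assms by (auto simp: orthonormal_pair_def inner_commute)
  define p where "p = u \<bullet> w"
  define q where "q = v \<bullet> w"
  have "(plane_matrix u v a b c d ** plane_matrix u v a' b' c' d') *v w
      = plane_matrix u v a b c d *v (plane_matrix u v a' b' c' d' *v w)"
    by (simp add: matrix_vector_mul_assoc)
  also have "\<dots> = w + ((a'-1)*p + b'*q + (a-1)*(p + (a'-1)*p + b'*q) + b*(q + c'*p + (d'-1)*q)) *\<^sub>R u
       + (c'*p + (d'-1)*q + c*(p + (a'-1)*p + b'*q) + (d-1)*(q + c'*p + (d'-1)*q)) *\<^sub>R v"
    by (simp add: plane_matrix_mult_vec uv p_def q_def algebra_simps)
  also have "\<dots> = plane_matrix u v (a*a' + b*c') (a*b' + b*d') (c*a' + d*c') (c*b' + d*d') *v w"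
    unfolding plane_matrix_mult_vec p_def[symmetric] q_def[symmetric]
    by (simp add: algebra_simps)
  finally show "(plane_matrix u v a b c d ** plane_matrix u v a' b' c' d') *v w
      = plane_matrix u v (a*a' + b*c') (a*b' + b*d') (c*a' + d*c') (c*b' + d*d') *v w" .
qed

lemma plane_matrix_id [simp]: "plane_matrix u v 1 0 0 1 = mat 1"
  by (simp add: plane_matrix_def)

lemma transpose_plane_matrix: "transpose (plane_matrix u v a b c d) = plane_matrix u v a c b d"
  by (simp add: vec_eq_iff plane_matrix_component transpose_def algebra_simps)

lemma plane_matrix_swap: "plane_matrix u v a b c d = plane_matrix v u d c b a"
  by (simp add: vec_eq_iff plane_matrix_component algebra_simps)

lemma plane_matrix_uminus: "plane_matrix u (- v) a b c d = plane_matrix u v a (- b) (- c) d"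
  by (simp add: vec_eq_iff plane_matrix_component)

lemma orthogonal_matrix_inner:
  fixes q :: "real^'n^'n"
  assumes "orthogonal_matrix q"
  shows "(q *v x) \<bullet> (q *v y) = x \<bullet> y"
  using assms orthogonal_transformation_matrix[of "(*v) q"]
  by (simp add: orthogonal_transformation_def)

lemma plane_matrix_conj:
  fixes q :: "real^'n^'n"
  assumes "orthogonal_matrix q"
  shows "q ** plane_matrix u v a b c d ** transpose q = plane_matrix (q *v u) (q *v v) a b c d"
proof (rule iffD2[OF matrix_eq], rule allI)
  fix w :: "real^'n"
  have "q *v (transpose q *v w) = w"
    using assms by (metis matrix_vector_mul_assoc matrix_vector_mul_lid orthogonal_matrix_def)
  moreover have "x \<bullet> (transpose q *v w) = (q *v x) \<bullet> w" for x
    by (metis dot_lmul_matrix inner_commute transpose_matrix_vector)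
  ultimately show "(q ** plane_matrix u v a b c d ** transpose q) *v w
      = plane_matrix (q *v u) (q *v v) a b c d *v w"
    by (simp add: matrix_vector_mul_assoc[symmetric] plane_matrix_mult_vec
        matrix_vector_right_distrib matrix_vector_mult_scaleR del: transpose_matrix_vector)
qed

abbreviation plane_rotation :: "real^'n \<Rightarrow> real^'n \<Rightarrow> real \<Rightarrow> real^'n^'n" where
  "plane_rotation u v t \<equiv> plane_matrix u v (cos t) (- sin t) (sin t) (cos t)"

lemma plane_rotation_add:
  "orthonormal_pair u v \<Longrightarrow> plane_rotation u v s ** plane_rotation u v t = plane_rotation u v (s + t)"
  by (simp add: plane_matrix_mult cos_add sin_add algebra_simps)

lemma orthogonal_matrix_plane_rotation:
  assumes "orthonormal_pair u v"
  shows "orthogonal_matrix (plane_rotation u v t)"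
proof -
  have "transpose (plane_rotation u v t) = plane_rotation u v (- t)"
    by (simp add: transpose_plane_matrix)
  then show ?thesis
    by (simp only: orthogonal_matrix plane_rotation_add[OF assms]) simp
qed

lemma det_plane_rotation:
  assumes "orthonormal_pair u v"
  shows "det (plane_rotation u v t) = 1"
proof -
  have "plane_rotation u v t = plane_rotation u v (t/2) ** plane_rotation u v (t/2)"
    by (simp only: plane_rotation_add[OF assms]) simp
  then have "det (plane_rotation u v t) = det (plane_rotation u v (t/2)) ^ 2"
    by (simp add: det_mul power2_eq_square)
  with det_orthogonal_matrix[OF orthogonal_matrix_plane_rotation[OF assms, of "t/2"]]
  show ?thesis by auto
qed

lemma plane_rotation_in_SOn: "orthonormal_pair u v \<Longrightarrow> plane_rotation u v t \<in> SOn"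
  by (simp add: SOn_def orthogonal_matrix_plane_rotation det_plane_rotation)

definition householder :: "real^'n \<Rightarrow> real^'n^'n" where
  "householder a = mat 1 - (2 / (a \<bullet> a)) *\<^sub>R outer_prod a a"

lemma householder_mult_vec: "householder a *v w = w - (2 * (a \<bullet> w) / (a \<bullet> a)) *\<^sub>R a"
  by (simp add: householder_def matrix_vector_mult_diff_rdistrib outer_prod_mult_vec
      scaleR_matrix_vector_assoc[symmetric])

lemma householder_fixes: "a \<bullet> w = 0 \<Longrightarrow> householder a *v w = w"
  by (simp add: householder_mult_vec)

lemma orthogonal_matrix_householder: "orthogonal_matrix (householder (a::real^'n))"
proof -
  have "transpose (householder a) = householder a"
    by (simp add: householder_def vec_eq_iff transpose_def outer_prod_def mat_def mult.commute)
  moreover have "householder a ** householder a = mat 1"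
  proof (rule iffD2[OF matrix_eq], rule allI)
    fix w :: "real^'n"
    show "(householder a ** householder a) *v w = mat 1 *v w"
      by (cases "a = 0") (simp_all add: matrix_vector_mul_assoc[symmetric] householder_mult_vec
          inner_diff_right)
  qed
  ultimately show ?thesis
    by (simp add: orthogonal_matrix)
qed

lemma householder_maps_unit:
  fixes u e :: "real^'n"
  assumes "u \<bullet> u = 1" "e \<bullet> e = 1"
  shows "householder (u - e) *v u = e"
proof (cases "u = e")
  case True
  then show ?thesis by (simp add: householder_mult_vec)
next
  case False
  have "(u - e) \<bullet> (u - e) = 2 * ((u - e) \<bullet> u)"
    using assms by (simp add: inner_diff_left inner_diff_right inner_commute)
  moreover have "(u - e) \<bullet> (u - e) \<noteq> 0"
    using False by simp
  ultimately show ?thesis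
    by (simp add: householder_mult_vec)
qed

definition diag_matrix :: "('n \<Rightarrow> real) \<Rightarrow> real^'n^'n" where
  "diag_matrix d = (\<chi> i j. if i = j then d i else 0)"

lemma diag_matrix_mult_vec: "diag_matrix d *v w = (\<chi> i. d i * w$i)"
  by (simp add: diag_matrix_def matrix_vector_mult_def vec_eq_iff if_distrib[where f="\<lambda>x. x * _"]
      cong: if_cong)

lemma diag_matrix_mult: "diag_matrix d ** diag_matrix e = diag_matrix (\<lambda>i. d i * e i)"
  by (simp add: diag_matrix_def matrix_matrix_mult_def vec_eq_iff if_distrib[where f="\<lambda>x. x * _"]
      cong: if_cong)

lemma diag_matrix_mult_left: "(diag_matrix d ** A) $ i $ j = d i * A $ i $ j"
  by (simp add: diag_matrix_def matrix_matrix_mult_def if_distrib[where f="\<lambda>x. x * _"]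
      cong: if_cong)

lemma diag_matrix_mult_right: "(A ** diag_matrix d) $ i $ j = A $ i $ j * d j"
  by (simp add: diag_matrix_def matrix_matrix_mult_def if_distrib[where f="\<lambda>x. _ * x"]
      cong: if_cong)

lemma transpose_diag_matrix [simp]: "transpose (diag_matrix d) = diag_matrix d"
  by (simp add: diag_matrix_def transpose_def vec_eq_iff)

lemma det_diag_matrix: "det (diag_matrix d) = prod d UNIV"
  by (subst det_diagonal) (simp_all add: diag_matrix_def)

lemma diag_matrix_one [simp]: "diag_matrix (\<lambda>i. 1) = mat 1"
  by (simp add: diag_matrix_def mat_def vec_eq_iff)

lemma orthogonal_matrix_diag_sign:
  assumes "\<And>i. d i = 1 \<or> d i = -1"
  shows "orthogonal_matrix (diag_matrix d)"
proof -
  have "(\<lambda>i. d i * d i) = (\<lambda>i. 1)"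
    using assms by (metis mult_1_left mult_minus1 minus_minus)
  then show ?thesis
    by (simp add: orthogonal_matrix diag_matrix_mult)
qed

definition coordinate_flip :: "'n \<Rightarrow> real^'n^'n" where
  "coordinate_flip n = diag_matrix (\<lambda>i. if i = n then -1 else 1)"

lemma orthogonal_matrix_coordinate_flip: "orthogonal_matrix (coordinate_flip n)"
  by (simp add: coordinate_flip_def orthogonal_matrix_diag_sign)

lemma det_coordinate_flip: "det (coordinate_flip n) = -1"
  by (simp add: coordinate_flip_def det_diag_matrix)

lemma coordinate_flip_mult_vec: "coordinate_flip n *v w = (\<chi> i. if i = n then - w$i else w$i)"
  by (simp add: coordinate_flip_def diag_matrix_mult_vec vec_eq_iff)

lemma axis_orthonormal_pair: "m \<noteq> n \<Longrightarrow> orthonormal_pair (axis m (1::real)) (axis n 1)"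
  by (simp add: orthonormal_pair_def inner_axis_axis)

lemma SOn_maps_orthonormal_pair_to_axes:
  fixes u v :: "real^'n"
  assumes uv: "orthonormal_pair u v" and "m \<noteq> n"
  obtains q where "q \<in> SOn" "q *v u = axis m 1" "q *v v = axis n 1 \<or> q *v v = - axis n 1"
proof -
  let ?em = "axis m (1::real)" and ?en = "axis n (1::real)"
  define w where "w = householder (u - ?em) *v v"
  define q where "q = householder (w - ?en) ** householder (u - ?em)"
  have unit: "u \<bullet> u = 1" "v \<bullet> v = 1" "?em \<bullet> ?em = 1" "?en \<bullet> ?en = 1"
    using uv by (auto simp: orthonormal_pair_def inner_axis_axis)
  have hu: "householder (u - ?em) *v u = ?em"
    by (rule householder_maps_unit) (use unit in auto)
  have "w \<bullet> ?em = 0"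
    using uv orthogonal_matrix_inner[OF orthogonal_matrix_householder, of "u - ?em" v u]
    by (simp add: w_def hu orthonormal_pair_def inner_commute)
  then have "(w - ?en) \<bullet> ?em = 0"
    using \<open>m \<noteq> n\<close> by (simp add: inner_diff_left inner_axis_axis)
  moreover have "w \<bullet> w = 1"
    using unit by (simp add: w_def orthogonal_matrix_inner orthogonal_matrix_householder)
  ultimately have qu: "q *v u = ?em" and qv: "q *v v = ?en"
    using unit by (simp_all add: q_def w_def matrix_vector_mul_assoc[symmetric] hu
        householder_fixes householder_maps_unit)
  have q: "orthogonal_matrix q"
    by (simp add: q_def orthogonal_matrix_mul orthogonal_matrix_householder)
  from det_orthogonal_matrix[OF q] show thesis
  proof
    assume "det q = 1"
    then show thesis
      using that q qu qv by (simp add: SOn_def)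
  next
    assume det: "det q = -1"
    have "coordinate_flip n ** q \<in> SOn"
      by (simp add: SOn_def orthogonal_matrix_mul orthogonal_matrix_coordinate_flip q det_mul
          det_coordinate_flip det)
    moreover have "(coordinate_flip n ** q) *v u = ?em" "(coordinate_flip n ** q) *v v = - ?en"
      using \<open>m \<noteq> n\<close> by (simp_all add: matrix_vector_mul_assoc[symmetric] qu qv
          coordinate_flip_mult_vec vec_eq_iff axis_def)
    ultimately show thesis
      using that by blast
  qed
qed

lemma transvection_eq_plane_matrix:
  "m \<noteq> n \<Longrightarrow> (\<chi> i j. if i = m \<and> j = n then c else of_bool (i = j))
     = plane_matrix (axis m 1) (axis n 1) 1 c 0 1"
  by (auto simp: vec_eq_iff plane_matrix_component axis_def)

lemma det_transvection:
  fixes m n :: "'n::finite"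
  assumes "m \<noteq> n"
  shows "det ((\<chi> i j. if i = m \<and> j = n then c else of_bool (i = j)) :: real^'n^'n) = 1"
proof -
  have "(\<chi> i j. if i = m \<and> j = n then c else of_bool (i = j))
      = (\<chi> k. if k = m then row m (mat 1) + c *s row n (mat 1) else row k (mat 1 :: real^'n^'n))"
    using assms by (auto simp: vec_eq_iff row_def mat_def)
  then show ?thesis
    using det_row_operation[OF assms, of "mat 1" c] by simp
qed

lemma diag_matrix_mult_transvection:
  assumes "m \<noteq> n" "d n \<noteq> 0"
  shows "diag_matrix d ** (\<chi> i j. if i = m \<and> j = n then c else of_bool (i = j))
    = (\<chi> i j. if i = m \<and> j = n then d m * c / d n else of_bool (i = j)) ** diag_matrix d"
  using assms by (auto simp: vec_eq_iff diag_matrix_mult_left diag_matrix_mult_right)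

lemma axis_dilation_eq_diag_matrix:
  "m \<noteq> n \<Longrightarrow> plane_matrix (axis m 1) (axis n 1) t 0 0 (1/t)
     = diag_matrix (\<lambda>i. if i = m then t else if i = n then 1/t else 1)"
  by (auto simp: vec_eq_iff plane_matrix_component axis_def diag_matrix_def)

lemma diag_matrix_mult_swap:
  assumes "m \<noteq> n"
  shows "diag_matrix d ** (\<chi> i j. mat 1 $ i $ Transposition.transpose m n j)
    = plane_rotation (axis m 1) (axis n 1) (pi/2)
      ** diag_matrix (\<lambda>i. (if i = n then -1 else 1) * d (Transposition.transpose m n i))"
  using assms by (auto simp: vec_eq_iff diag_matrix_mult_left diag_matrix_mult_right
      plane_matrix_component axis_def mat_def Transposition.transpose_def)

lemma prod_dilation_entries:
  fixes k f :: "'n::finite"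
  assumes "k \<noteq> f" "t \<noteq> 0"
  shows "(\<Prod>i\<in>UNIV. if i = k then t else if i = f then 1/t else 1) = (1::real)"
proof -
  have split: "(\<lambda>i. if i = k then t else if i = f then 1/t else 1)
      = (\<lambda>i. (if i = k then t else 1) * (if i = f then 1/t else 1::real))"
    using assms by (auto simp: fun_eq_iff)
  show ?thesis
    unfolding split using assms by (simp add: prod.distrib)
qed

lemma diag_matrix_move_entry:
  assumes "k \<noteq> f" "d k \<noteq> 0"
  shows "diag_matrix d = diag_matrix (d(k := 1, f := d f * d k))
    ** diag_matrix (\<lambda>i. if i = k then d k else if i = f then 1 / d k else 1)"
  unfolding diag_matrix_mult
  by (rule arg_cong[where f = diag_matrix]) (use assms in \<open>auto simp: fun_eq_iff\<close>)

lemma polar_coordinates: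
  fixes x y :: real
  obtains t where "x = sqrt (x\<^sup>2 + y\<^sup>2) * cos t" "y = sqrt (x\<^sup>2 + y\<^sup>2) * sin t"
proof -
  have "rcis (cmod (Complex x y)) (Arg (Complex x y)) = Complex x y"
    by (rule rcis_cmod_Arg)
  then show thesis
    using that[of "Arg (Complex x y)"] by (simp add: complex_eq_iff complex_norm)
qed

text \<open>Singular value decomposition of the \<open>2 \<times> 2\<close> block: it is \<open>\<alpha>\<close> times a rotation by some
  angle \<open>p\<close> plus \<open>\<beta>\<close> times a reflection with some angle \<open>q\<close>, and \<open>x = (p + q)/2\<close>,
  \<open>y = (p - q)/2\<close>.\<close>

lemma plane_matrix_svd:
  fixes u v :: "real^'n" and a b c d :: real
  assumes uv: "orthonormal_pair u v"
  defines "\<alpha> \<equiv> sqrt (((a + d)/2)\<^sup>2 + ((c - b)/2)\<^sup>2)"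
    and "\<beta> \<equiv> sqrt (((a - d)/2)\<^sup>2 + ((b + c)/2)\<^sup>2)"
  obtains x y where "plane_matrix u v a b c d
    = plane_rotation u v x ** plane_matrix u v (\<alpha> + \<beta>) 0 0 (\<alpha> - \<beta>) ** plane_rotation u v y"
proof -
  obtain p where p: "(a + d)/2 = \<alpha> * cos p" "(c - b)/2 = \<alpha> * sin p"
    using polar_coordinates unfolding \<alpha>_def by metis
  obtain q where q: "(a - d)/2 = \<beta> * cos q" "(b + c)/2 = \<beta> * sin q"
    using polar_coordinates unfolding \<beta>_def by metis
  define x where "x = (p + q)/2"
  define y where "y = (p - q)/2"
  have entries: "a = \<alpha> * cos (x + y) + \<beta> * cos (x - y)" "b = - \<alpha> * sin (x + y) + \<beta> * sin (x - y)"
    "c = \<alpha> * sin (x + y) + \<beta> * sin (x - y)" "d = \<alpha> * cos (x + y) - \<beta> * cos (x - y)"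
    using p q by (simp_all add: x_def y_def field_simps)
  show thesis
  proof (rule that[of x y])
    show "plane_matrix u v a b c d
      = plane_rotation u v x ** plane_matrix u v (\<alpha> + \<beta>) 0 0 (\<alpha> - \<beta>) ** plane_rotation u v y"
      unfolding plane_matrix_mult[OF uv] entries cos_add sin_add cos_diff sin_diff
      by (simp add: algebra_simps)
  qed
qed

section \<open>Non-conformal matrices\<close>

lemma norm_mult_vec_normalized:
  fixes g :: "real^'n^'m"
  shows "norm (g *v (w /\<^sub>R norm w)) = norm (g *v w) / norm w"
  by (simp add: matrix_vector_mult_scaleR divide_inverse_commute)

definition conformal_matrix :: "real^'n^'n \<Rightarrow> bool" where
  "conformal_matrix g \<longleftrightarrow> (\<exists>l. \<forall>x. norm (g *v x) = l * norm x)"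

lemma conformal_matrixI:
  fixes g :: "real^'n^'n"
  assumes unit: "\<And>w. norm w = 1 \<Longrightarrow> norm (g *v w) = l"
  shows "conformal_matrix g"
proof -
  have "norm (g *v w) = l * norm w" for w
  proof (cases "w = 0")
    case False
    have "norm (g *v w) / norm w = norm (g *v (w /\<^sub>R norm w))"
      by (simp add: norm_mult_vec_normalized)
    also have "\<dots> = l"
      using False by (intro unit) simp
    finally show ?thesis
      using False by (simp add: divide_eq_eq)
  qed simp
  then show ?thesis
    unfolding conformal_matrix_def by blast
qed

lemma quadratic_nonpos_imp_linear_coeff_zero:
  fixes b c :: real
  assumes "\<And>t. 2 * t * b + t\<^sup>2 * c \<le> 0"
  shows "b = 0"
proof (rule ccontr)
  assume "b \<noteq> 0"
  define m where "m = \<bar>c\<bar> + 1"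
  have "m > 0" "2 * m + c > 0"
    by (simp_all add: m_def)
  have "2 * (b/m) * b + (b/m)\<^sup>2 * c = b\<^sup>2 * (2 * m + c) / m\<^sup>2"
    using \<open>m > 0\<close> by (simp add: power2_eq_square field_simps)
  moreover have "b\<^sup>2 * (2 * m + c) / m\<^sup>2 > 0"
    using \<open>b \<noteq> 0\<close> \<open>m > 0\<close> \<open>2 * m + c > 0\<close> by simp
  ultimately show False
    using assms[of "b/m"] by linarith
qed

text \<open>With \<open>\<sigma> = 1\<close> for a maximum and \<open>\<sigma> = -1\<close> for a minimum of \<open>\<bar>g y\<bar>\<close> on the unit sphere:
  the derivative of \<open>\<bar>g w\<bar>\<^sup>2 / \<bar>w\<bar>\<^sup>2\<close> vanishes at \<open>x\<close>.\<close>

lemma sphere_extremum_inner: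
  fixes g :: "real^'n^'n"
  assumes "\<sigma> \<noteq> 0" and x: "norm x = 1"
    and extremum: "\<And>y. norm y = 1 \<Longrightarrow> \<sigma> * (norm (g *v y))\<^sup>2 \<le> \<sigma> * (norm (g *v x))\<^sup>2"
  shows "(g *v x) \<bullet> (g *v z) = (x \<bullet> z) * (norm (g *v x))\<^sup>2"
proof -
  have homogeneous: "\<sigma> * (norm (g *v w))\<^sup>2 \<le> \<sigma> * (norm (g *v x))\<^sup>2 * (norm w)\<^sup>2" for w
  proof (cases "w = 0")
    case False
    have "\<sigma> * (norm (g *v w))\<^sup>2 / (norm w)\<^sup>2 \<le> \<sigma> * (norm (g *v x))\<^sup>2"
      using extremum[of "w /\<^sub>R norm w"] False by (simp add: norm_mult_vec_normalized power_divide)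
    then show ?thesis
      using False by (simp add: pos_divide_le_eq)
  qed simp
  have xx: "x \<bullet> x = 1"
    using x by (simp add: norm_eq_1)
  define z' where "z' = z - (x \<bullet> z) *\<^sub>R x"
  have xz': "x \<bullet> z' = 0"
    using xx by (simp add: z'_def inner_diff_right)
  have "2 * t * (\<sigma> * ((g *v x) \<bullet> (g *v z')))
      + t\<^sup>2 * (\<sigma> * ((norm (g *v z'))\<^sup>2 - (norm (g *v x))\<^sup>2 * (norm z')\<^sup>2)) \<le> 0" for t
  proof -
    have "(norm (g *v (x + t *\<^sub>R z')))\<^sup>2
        = (norm (g *v x))\<^sup>2 + 2 * t * ((g *v x) \<bullet> (g *v z')) + t\<^sup>2 * (norm (g *v z'))\<^sup>2"
      unfolding power2_norm_eq_inner
      by (simp add: inner_commute power2_eq_square algebra_simps)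
    moreover have "(norm (x + t *\<^sub>R z'))\<^sup>2 = 1 + t\<^sup>2 * (norm z')\<^sup>2"
      using xx xz' unfolding power2_norm_eq_inner
      by (simp add: inner_add_left inner_add_right inner_commute power2_eq_square)
    ultimately show ?thesis
      using homogeneous[of "x + t *\<^sub>R z'"] by (simp add: algebra_simps)
  qed
  then have "\<sigma> * ((g *v x) \<bullet> (g *v z')) = 0"
    by (rule quadratic_nonpos_imp_linear_coeff_zero)
  then show ?thesis
    using \<open>\<sigma> \<noteq> 0\<close> by (simp add: z'_def matrix_vector_mult_diff_distrib matrix_vector_mult_scaleR
        inner_diff_right power2_norm_eq_inner)
qed

lemma extremal_unit_vectors:
  fixes g :: "real^'n^'n"
  assumes "\<not> conformal_matrix g"
  obtains x y where "norm x = 1" "norm y = 1" "norm (g *v y) < norm (g *v x)"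
    "\<And>z. (g *v x) \<bullet> (g *v z) = (x \<bullet> z) * (norm (g *v x))\<^sup>2"
    "\<And>z. (g *v y) \<bullet> (g *v z) = (y \<bullet> z) * (norm (g *v y))\<^sup>2"
proof -
  let ?S = "sphere (0::real^'n) 1"
  have S: "compact ?S" "?S \<noteq> {}"
    by simp_all
  have cont: "continuous_on ?S (\<lambda>y. norm (g *v y))"
    by (intro continuous_on_norm linear_continuous_on matrix_vector_mul_bounded_linear)
  obtain x where "x \<in> ?S" and max: "\<And>y. y \<in> ?S \<Longrightarrow> norm (g *v y) \<le> norm (g *v x)"
    using continuous_attains_sup[OF S cont] by blast
  obtain y where "y \<in> ?S" and min: "\<And>z. z \<in> ?S \<Longrightarrow> norm (g *v y) \<le> norm (g *v z)"
    using continuous_attains_inf[OF S cont] by blast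
  have "norm (g *v y) < norm (g *v x)"
  proof (rule ccontr)
    assume "\<not> norm (g *v y) < norm (g *v x)"
    then have "norm (g *v w) = norm (g *v x)" if "norm w = 1" for w
      using max[of w] min[of w] that by simp
    then show False
      using assms conformal_matrixI by blast
  qed
  moreover have "(g *v x) \<bullet> (g *v z) = (x \<bullet> z) * (norm (g *v x))\<^sup>2" for z
  proof (rule sphere_extremum_inner[of 1])
    show "1 * (norm (g *v y'))\<^sup>2 \<le> 1 * (norm (g *v x))\<^sup>2" if "norm y' = 1" for y'
      using max[of y'] that by (simp add: power_mono)
  qed (use \<open>x \<in> ?S\<close> in simp_all)
  moreover have "(g *v y) \<bullet> (g *v z) = (y \<bullet> z) * (norm (g *v y))\<^sup>2" for z
  proof (rule sphere_extremum_inner[of "-1"])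
    show "-1 * (norm (g *v y'))\<^sup>2 \<le> -1 * (norm (g *v y))\<^sup>2" if "norm y' = 1" for y'
      using min[of y'] that by (simp add: power_mono)
  qed (use \<open>y \<in> ?S\<close> in simp_all)
  ultimately show thesis
    using that \<open>x \<in> ?S\<close> \<open>y \<in> ?S\<close> by simp
qed

lemma plane_matrix_conj_scaled:
  fixes g h :: "real^'n^'n"
  assumes gh: "g ** h = mat 1" and "a \<noteq> 0" "b \<noteq> 0"
    and g: "g *v x = a *\<^sub>R u" "g *v y = b *\<^sub>R v"
    and h: "transpose h *v x = (1/a) *\<^sub>R u" "transpose h *v y = (1/b) *\<^sub>R v"
  shows "g ** plane_matrix x y A B C D ** h = plane_matrix u v A (a/b * B) (b/a * C) D"
proof (rule iffD2[OF matrix_eq], rule allI)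
  fix w :: "real^'n"
  define p where "p = u \<bullet> w"
  define q where "q = v \<bullet> w"
  have "g *v (h *v w) = w"
    using gh by (simp add: matrix_vector_mul_assoc)
  moreover have "x \<bullet> (h *v w) = p / a" "y \<bullet> (h *v w) = q / b"
    using h by (simp_all add: p_def q_def flip: dot_lmul_matrix)
  ultimately have "(g ** plane_matrix x y A B C D ** h) *v w
      = w + (((A - 1) * (p / a) + B * (q / b)) * a) *\<^sub>R u
          + ((C * (p / a) + (D - 1) * (q / b)) * b) *\<^sub>R v"
    by (simp add: matrix_vector_mul_assoc[symmetric] plane_matrix_mult_vec
        matrix_vector_right_distrib
        matrix_vector_mult_scaleR g)
  moreover have "((A - 1) * (p / a) + B * (q / b)) * a = (A - 1) * p + a/b * B * q"
    "(C * (p / a) + (D - 1) * (q / b)) * b = b/a * C * p + (D - 1) * q"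
    using \<open>a \<noteq> 0\<close> \<open>b \<noteq> 0\<close> by (simp_all add: field_simps)
  ultimately show "(g ** plane_matrix x y A B C D ** h) *v w
      = plane_matrix u v A (a/b * B) (b/a * C) D *v w"
    by (simp add: plane_matrix_mult_vec p_def q_def)
qed

lemma transpose_right_inverse_mult_vec:
  fixes g h :: "real^'n^'n"
  assumes gh: "g ** h = mat 1" and eig: "\<And>z. (g *v p) \<bullet> (g *v z) = (p \<bullet> z) * c"
    and "c \<noteq> 0"
  shows "transpose h *v p = (1/c) *\<^sub>R (g *v p)"
proof -
  have "(transpose h *v p) \<bullet> w = ((1/c) *\<^sub>R (g *v p)) \<bullet> w" for w
  proof -
    have "(g *v p) \<bullet> w = (g *v p) \<bullet> (g *v (h *v w))"
      using gh by (simp add: matrix_vector_mul_assoc)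
    also have "\<dots> = (p \<bullet> (h *v w)) * c"
      by (rule eig)
    finally show ?thesis
      using \<open>c \<noteq> 0\<close> by (simp add: dot_lmul_matrix)
  qed
  then show ?thesis
    using vector_eq_rdot by blast
qed

text \<open>Take unit vectors \<open>x\<close>, \<open>y\<close> maximising and minimising \<open>\<bar>g w\<bar>\<close>. They are orthogonal, \<open>g\<close>
  maps them to orthogonal vectors \<open>a u\<close>, \<open>b v\<close>, and conjugation by \<open>g\<close> turns the quarter turn of the
  plane of \<open>x, y\<close> into the quarter turn of the plane of \<open>u, v\<close> composed with the dilation of
  that plane by the factors \<open>b/a\<close>, \<open>a/b\<close>.\<close>

lemma nonconformal_conj_quarter_turn:
  fixes g :: "real^'n^'n"
  assumes "invertible g" "\<not> conformal_matrix g"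
  obtains x y u v r where "orthonormal_pair x y" "orthonormal_pair u v" "0 < r" "r < 1"
    "g ** plane_matrix x y 0 (- 1) 1 0 ** matrix_inv g = plane_matrix u v 0 (- (1/r)) r 0"
proof -
  obtain x y where x: "norm x = 1" and y: "norm y = 1" and less: "norm (g *v y) < norm (g *v x)"
    and eig_x: "\<And>z. (g *v x) \<bullet> (g *v z) = (x \<bullet> z) * (norm (g *v x))\<^sup>2"
    and eig_y: "\<And>z. (g *v y) \<bullet> (g *v z) = (y \<bullet> z) * (norm (g *v y))\<^sup>2"
    using extremal_unit_vectors[OF assms(2)] by blast
  define a where "a = norm (g *v x)"
  define b where "b = norm (g *v y)"
  define u where "u = (1/a) *\<^sub>R (g *v x)"
  define v where "v = (1/b) *\<^sub>R (g *v y)"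
  have gh: "g ** matrix_inv g = mat 1" "matrix_inv g ** g = mat 1"
    using assms(1) by (simp_all add: matrix_inv_right matrix_inv_left)
  then have "matrix_inv g *v (g *v y) = y"
    by (simp add: matrix_vector_mul_assoc)
  then have "0 < b" "b < a" "g *v x \<noteq> 0"
    using y less by (auto simp: a_def b_def)
  have "(x \<bullet> y) * a\<^sup>2 = (x \<bullet> y) * b\<^sup>2"
    using eig_x[of y] eig_y[of x] by (simp add: a_def b_def inner_commute)
  moreover have "b\<^sup>2 < a\<^sup>2"
    using \<open>0 < b\<close> \<open>b < a\<close> by (simp add: power_strict_mono)
  ultimately have "x \<bullet> y = 0"
    by auto
  then have xy: "orthonormal_pair x y"
    using x y by (simp add: orthonormal_pair_def norm_eq_1)
  have uv: "orthonormal_pair u v"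
    using \<open>g *v x \<noteq> 0\<close> \<open>0 < b\<close> \<open>b < a\<close> eig_x[of y] \<open>x \<bullet> y = 0\<close>
    by (simp add: orthonormal_pair_def u_def v_def a_def b_def power2_norm_eq_inner[symmetric])
  have "transpose (matrix_inv g) *v x = (1/a) *\<^sub>R u" "transpose (matrix_inv g) *v y = (1/b) *\<^sub>R v"
    using transpose_right_inverse_mult_vec[OF gh(1) eig_x]
      transpose_right_inverse_mult_vec[OF gh(1) eig_y]
      \<open>g *v x \<noteq> 0\<close> \<open>0 < b\<close>
    by (simp_all add: u_def v_def a_def b_def power2_eq_square)
  then have "g ** plane_matrix x y 0 (- 1) 1 0 ** matrix_inv g
      = plane_matrix u v 0 (- (1/(b/a))) (b/a) 0"
    using gh \<open>0 < b\<close> \<open>b < a\<close>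
    by (subst plane_matrix_conj_scaled[of g "matrix_inv g" a b x u y v]) (simp_all add: u_def v_def)
  moreover have "0 < b/a" "b/a < 1"
    using \<open>0 < b\<close> \<open>b < a\<close> by simp_all
  ultimately show thesis
    using that xy uv by blast
qed

section \<open>Subgroups of \<open>GL\<^sub>n\<close> containing \<open>SO\<^sub>n\<close>\<close>

locale SOn_overgroup =
  fixes G :: "(real^'n::finite^'n) set"
  assumes subgroup: "is_subgroup_GL G" and SOn_subset: "SOn \<subseteq> G"
begin

lemma mult_mem: "A \<in> G \<Longrightarrow> B \<in> G \<Longrightarrow> A ** B \<in> G"
  using subgroup by (simp add: is_subgroup_GL_def)

lemma one_mem: "mat 1 \<in> G"
  using subgroup by (simp add: is_subgroup_GL_def)

lemma matrix_inv_mem: "A \<in> G \<Longrightarrow> matrix_inv A \<in> G"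
  using subgroup by (simp add: is_subgroup_GL_def)

lemma invertible_mem: "A \<in> G \<Longrightarrow> invertible A"
  using subgroup by (auto simp: is_subgroup_GL_def GLn_def)

lemma plane_rotation_mem: "orthonormal_pair u v \<Longrightarrow> plane_rotation u v t \<in> G"
  using SOn_subset plane_rotation_in_SOn by blast

text \<open>For determinant 1 the sum of squares of the entries determines the singular values, hence
  the double coset modulo rotations of the plane.\<close>

lemma plane_matrix_mem_if_same_sum_squares:
  assumes uv: "orthonormal_pair u v" and mem: "plane_matrix u v a b c d \<in> G"
    and det: "a*d - b*c = 1" "a'*d' - b'*c' = 1"
    and sum_squares: "a\<^sup>2 + b\<^sup>2 + c\<^sup>2 + d\<^sup>2 = a'\<^sup>2 + b'\<^sup>2 + c'\<^sup>2 + d'\<^sup>2"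
  shows "plane_matrix u v a' b' c' d' \<in> G"
proof -
  let ?R = "plane_rotation u v"
  have "((a + d)/2)\<^sup>2 + ((c - b)/2)\<^sup>2 = ((a' + d')/2)\<^sup>2 + ((c' - b')/2)\<^sup>2"
    "((a - d)/2)\<^sup>2 + ((b + c)/2)\<^sup>2 = ((a' - d')/2)\<^sup>2 + ((b' + c')/2)\<^sup>2"
    using det sum_squares by (simp_all add: power2_eq_square field_simps)
  then obtain D x y x' y' where
    svd: "plane_matrix u v a b c d = ?R x ** D ** ?R y" and
    svd': "plane_matrix u v a' b' c' d' = ?R x' ** D ** ?R y'"
    using plane_matrix_svd[OF uv, of a b c d] plane_matrix_svd[OF uv, of a' b' c' d'] by metis
  have "?R (- x) ** plane_matrix u v a b c d ** ?R (- y)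
      = (?R (- x) ** ?R x) ** D ** (?R y ** ?R (- y))"
    unfolding svd by (simp only: matrix_mul_assoc)
  also have "\<dots> = D"
    by (simp only: plane_rotation_add[OF uv]) simp
  finally have "D \<in> G"
    using mem plane_rotation_mem[OF uv] mult_mem by metis
  then show ?thesis
    by (simp add: svd' mult_mem plane_rotation_mem uv)
qed

text \<open>With \<open>cos t = p\<close>, the product \<open>diag (r, 1/r) \<cdot> rot t \<cdot> diag (r, 1/r)\<close> has determinant 1 and
  sum of squares \<open>2 + p\<^sup>2 (r\<^sup>2 - 1/r\<^sup>2)\<^sup>2\<close>, which is that of the shear by \<open>c\<close> for
  \<open>p = \<bar>c\<bar> / \<bar>r\<^sup>2 - 1/r\<^sup>2\<bar>\<close>.\<close>

lemma plane_shear_mem_small: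
  assumes uv: "orthonormal_pair u v" and "r \<noteq> 0"
    and dilation: "plane_matrix u v r 0 0 (1/r) \<in> G"
    and c: "\<bar>c\<bar> \<le> \<bar>r\<^sup>2 - 1/r\<^sup>2\<bar>"
  shows "plane_matrix u v 1 c 0 1 \<in> G"
proof -
  define e where "e = \<bar>r\<^sup>2 - 1/r\<^sup>2\<bar>"
  define p where "p = \<bar>c\<bar> / e"
  define q where "q = sqrt (1 - p\<^sup>2)"
  have "0 \<le> p" "p \<le> 1"
    using c by (simp_all add: p_def e_def divide_le_eq_1)
  then have pq: "p\<^sup>2 + q\<^sup>2 = 1"
    by (simp add: q_def power_le_one)
  then obtain t where t: "cos t = p" "sin t = q"
    using sincos_total_2pi_le by metis
  have "plane_matrix u v r 0 0 (1/r) ** plane_rotation u v t ** plane_matrix u v r 0 0 (1/r)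
    = plane_matrix u v (r\<^sup>2 * p) (- q) q (p / r\<^sup>2)"
    using \<open>r \<noteq> 0\<close>
    by (simp add: plane_matrix_mult[OF uv] t power2_eq_square mult.commute mult.left_commute)
  moreover have
    "plane_matrix u v r 0 0 (1/r) ** plane_rotation u v t ** plane_matrix u v r 0 0 (1/r) \<in> G"
    by (simp add: mult_mem dilation plane_rotation_mem uv)
  ultimately have "plane_matrix u v (r\<^sup>2 * p) (- q) q (p / r\<^sup>2) \<in> G"
    by simp
  then show ?thesis
  proof (rule plane_matrix_mem_if_same_sum_squares[OF uv])
    show "r\<^sup>2 * p * (p / r\<^sup>2) - - q * q = 1"
      using \<open>r \<noteq> 0\<close> pq by (simp add: power2_eq_square)
    have "(- q)\<^sup>2 + q\<^sup>2 = 2 - 2 * p\<^sup>2"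
      using pq by simp
    then have "(r\<^sup>2 * p)\<^sup>2 + (- q)\<^sup>2 + q\<^sup>2 + (p / r\<^sup>2)\<^sup>2
        = (r\<^sup>2 * p)\<^sup>2 + (2 - 2 * p\<^sup>2) + (p / r\<^sup>2)\<^sup>2"
      by simp
    also have "\<dots> = 2 + (p * e)\<^sup>2"
      using \<open>r \<noteq> 0\<close> by (simp add: e_def power2_eq_square field_simps)
    also have "p * e = \<bar>c\<bar>"
      using c by (auto simp: p_def e_def)
    finally show "(r\<^sup>2 * p)\<^sup>2 + (- q)\<^sup>2 + q\<^sup>2 + (p / r\<^sup>2)\<^sup>2 = 1\<^sup>2 + c\<^sup>2 + 0\<^sup>2 + 1\<^sup>2"
      by simp
  qed simp
qed

lemma plane_shear_mem:
  assumes uv: "orthonormal_pair u v" and r: "r > 0" "r \<noteq> 1"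
    and dilation: "plane_matrix u v r 0 0 (1/r) \<in> G"
  shows "plane_matrix u v 1 c 0 1 \<in> G"
proof -
  let ?S = "\<lambda>c. plane_matrix u v 1 c 0 1"
  define e where "e = \<bar>r\<^sup>2 - 1/r\<^sup>2\<bar>"
  have "r\<^sup>2 \<noteq> 1" "r\<^sup>2 > 0"
    using r by (simp_all add: power2_eq_1_iff)
  then have "(r\<^sup>2)\<^sup>2 \<noteq> 1"
    by (auto simp only: power2_eq_1_iff)
  then have "e > 0"
    using r by (simp add: e_def field_simps power2_eq_square)
  have multiple: "?S (real N * b) \<in> G" if "\<bar>b\<bar> \<le> e" for N b
  proof (induction N)
    case 0
    show ?case
      by (simp add: one_mem)
  next
    case (Suc N)
    have "?S (real N * b) ** ?S b = ?S (real (Suc N) * b)"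
      by (simp add: plane_matrix_mult[OF uv] algebra_simps)
    then show ?case
      using Suc.IH plane_shear_mem_small[OF uv _ dilation] that r mult_mem unfolding e_def by force
  qed
  obtain N where "\<bar>c\<bar> / e \<le> real N"
    using real_arch_simple by blast
  then have "\<bar>c / real (Suc N)\<bar> \<le> e"
    using \<open>e > 0\<close> by (simp add: field_simps)
  then show ?thesis
    using multiple[of "c / real (Suc N)" "Suc N"] by simp
qed

lemma plane_dilation_mem_of_shears:
  assumes uv: "orthonormal_pair u v"
    and shears: "\<And>c. plane_matrix u v 1 c 0 1 \<in> G" "\<And>c. plane_matrix v u 1 c 0 1 \<in> G"
    and "t \<noteq> 0"
  shows "plane_matrix u v t 0 0 (1/t) \<in> G"
proof -
  let ?E = "plane_matrix u v"
  have "?E 1 t 0 1 ** ?E 1 0 (- 1/t) 1 ** ?E 1 t 0 1 ** ?E 0 (- 1) 1 0 = ?E t 0 0 (1/t)"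
    using \<open>t \<noteq> 0\<close> by (simp add: plane_matrix_mult[OF uv] field_simps)
  moreover have "?E 1 0 (- 1/t) 1 \<in> G"
    using shears(2)[of "- 1/t"] by (simp add: plane_matrix_swap[of v u])
  moreover have "?E 0 (- 1) 1 0 \<in> G"
    using plane_rotation_mem[OF uv, of "pi/2"] by simp
  ultimately show ?thesis
    using shears(1) mult_mem by metis
qed

lemma axis_shear_mem:
  assumes uv: "orthonormal_pair u v" and shears: "\<And>c. plane_matrix u v 1 c 0 1 \<in> G"
    and "m \<noteq> n"
  shows "plane_matrix (axis m 1) (axis n 1) 1 c 0 1 \<in> G"
proof -
  obtain q where q: "q \<in> SOn" "q *v u = axis m 1"
    and qv: "q *v v = axis n 1 \<or> q *v v = - axis n 1"
    using SOn_maps_orthonormal_pair_to_axes[OF uv \<open>m \<noteq> n\<close>] by blast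
  have "q \<in> G" "transpose q \<in> G"
    using q SOn_subset by (auto simp: SOn_def)
  then have "q ** plane_matrix u v 1 c' 0 1 ** transpose q \<in> G" for c'
    by (simp add: mult_mem shears)
  then have conj: "plane_matrix (axis m 1) (q *v v) 1 c' 0 1 \<in> G" for c'
    using q by (simp add: plane_matrix_conj SOn_def)
  from qv show ?thesis
  proof
    assume "q *v v = - axis n 1"
    then show ?thesis
      using conj[of "- c"] by (simp add: plane_matrix_uminus)
  qed (use conj in simp)
qed

lemma diag_matrix_mem:
  assumes dilations: "\<And>m n t. m \<noteq> n \<Longrightarrow> t \<noteq> 0 \<Longrightarrow>
      diag_matrix (\<lambda>i. if i = m then t else if i = n then 1/t else 1) \<in> G"
    and "prod d UNIV = 1"
  shows "diag_matrix d \<in> G"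
proof -
  obtain f :: 'n where True
    by simp
  have "diag_matrix d \<in> G" if "finite K" "\<And>i. i \<notin> K \<Longrightarrow> i \<noteq> f \<Longrightarrow> d i = 1" "prod d UNIV = 1"
    for K d
    using that
  proof (induction K arbitrary: d rule: finite_induct)
    case empty
    have "prod d UNIV = prod d {f}"
      using empty.prems(1) by (intro prod.mono_neutral_right) auto
    then have "d i = 1" for i
      using empty.prems by (cases "i = f") auto
    then show ?case
      by (simp add: one_mem)
  next
    case (insert k K)
    show ?case
    proof (cases "k = f")
      case True
      then show ?thesis
        using insert.prems by (intro insert.IH) auto
    next
      case False
      have "d k \<noteq> 0"
        using insert.prems(2) by (metis UNIV_I finite prod_zero_iff zero_neq_one)
      note move = diag_matrix_move_entry[of k f d, OF False \<open>d k \<noteq> 0\<close>]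
      have "prod (d(k := 1, f := d f * d k)) UNIV = prod d UNIV"
        using arg_cong[OF move, of det] \<open>d k \<noteq> 0\<close> False
        by (simp add: det_mul det_diag_matrix prod_dilation_entries)
      then have "diag_matrix (d(k := 1, f := d f * d k)) \<in> G"
        using insert.prems by (intro insert.IH) auto
      then show ?thesis
        using dilations[OF False \<open>d k \<noteq> 0\<close>] by (subst move) (rule mult_mem)
    qed
  qed
  from this[of UNIV d] show ?thesis
    using assms(2) by simp
qed

text \<open>Every invertible matrix maps this set into itself by right multiplication (it suffices to
  check elementary matrices); since it contains the identity, it contains \<open>SL\<^sub>n\<close>.\<close>

definition SL_diagonal_products :: "(real^'n^'n) set" where
  "SL_diagonal_products = {s ** diag_matrix d | s d. s \<in> G \<inter> SLn \<and> (\<forall>i. d i \<noteq> 0)}"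

lemma SL_diagonal_productsI:
  "s \<in> G \<inter> SLn \<Longrightarrow> \<forall>i. d i \<noteq> 0 \<Longrightarrow> s ** diag_matrix d \<in> SL_diagonal_products"
  unfolding SL_diagonal_products_def by blast

lemma SL_diagonal_products_mult_closedI:
  assumes "\<And>s d. s \<in> G \<inter> SLn \<Longrightarrow> \<forall>i. d i \<noteq> 0 \<Longrightarrow> s ** diag_matrix d ** X \<in> SL_diagonal_products"
  shows "\<forall>M\<in>SL_diagonal_products. M ** X \<in> SL_diagonal_products"
  using assms unfolding SL_diagonal_products_def by blast

lemma G_Int_SLn_mult: "s \<in> G \<inter> SLn \<Longrightarrow> t \<in> G \<inter> SLn \<Longrightarrow> s ** t \<in> G \<inter> SLn"
  by (simp add: SLn_def det_mul mult_mem)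

lemma SL_diagonal_products_right_mult:
  assumes transvections: "\<And>m n c. m \<noteq> n \<Longrightarrow> (\<chi> i j. if i = m \<and> j = n then c else of_bool (i = j)) \<in> G"
  shows "det A = 0 \<or> (\<forall>M\<in>SL_diagonal_products. M ** A \<in> SL_diagonal_products)"
proof (induction A rule:
    induct_matrix_elementary[case_names mult zero_row diagonal swap transvection])
  case (mult A B)
  then show ?case
    by (metis det_mul matrix_mul_assoc mult_eq_0_iff)
next
  case (zero_row A i)
  then show ?case
    by (simp add: det_zero_row)
next
  case (diagonal A)
  then have A: "A = diag_matrix (\<lambda>i. A $ i $ i)"
    by (auto simp: vec_eq_iff diag_matrix_def)
  have "det A = 0 \<or> (\<forall>i. A $ i $ i \<noteq> 0)"
    by (subst A) (auto simp: det_diag_matrix)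
  moreover have eq: "s ** diag_matrix d ** A = s ** diag_matrix (\<lambda>i. d i * A $ i $ i)"
    for s :: "real^'n^'n" and d
    by (subst A) (simp add: diag_matrix_mult flip: matrix_mul_assoc)
  ultimately show ?case
    by (auto simp: eq intro!: SL_diagonal_products_mult_closedI SL_diagonal_productsI)
next
  case (swap m n)
  let ?P = "(\<chi> i j. mat 1 $ i $ Transposition.transpose m n j) :: real^'n^'n"
  let ?W = "plane_rotation (axis m 1) (axis n 1) (pi/2) :: real^'n^'n"
  have "?W \<in> G \<inter> SLn"
    using plane_rotation_mem det_plane_rotation axis_orthonormal_pair[OF swap]
    unfolding SLn_def by blast
  moreover have eq: "s ** diag_matrix d ** ?P
      = (s ** ?W)
        ** diag_matrix (\<lambda>i. (if i = n then -1 else 1) * d (Transposition.transpose m n i))"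
    for s :: "real^'n^'n" and d
    by (simp add: diag_matrix_mult_swap[OF swap] flip: matrix_mul_assoc)
  ultimately show ?case
    by (auto simp: eq split: if_splits
        intro!: SL_diagonal_products_mult_closedI SL_diagonal_productsI G_Int_SLn_mult)
next
  case (transvection m n c)
  have "(\<chi> i j. if i = m \<and> j = n then c' else of_bool (i = j)) \<in> G \<inter> SLn" for c'
    using transvection by (simp add: transvections SLn_def det_transvection)
  moreover have eq: "s ** diag_matrix d ** (\<chi> i j. if i = m \<and> j = n then c else of_bool (i = j))
      = (s ** (\<chi> i j. if i = m \<and> j = n then d m * c / d n else of_bool (i = j))) ** diag_matrix d"
    if "d n \<noteq> 0" for s :: "real^'n^'n" and d
    using that transvection by (simp add: diag_matrix_mult_transvection flip: matrix_mul_assoc)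
  ultimately show ?case
    by (auto simp: eq
        intro!: SL_diagonal_products_mult_closedI SL_diagonal_productsI G_Int_SLn_mult)
qed

lemma SLn_subset_of_transvections:
  assumes transvections: "\<And>m n c. m \<noteq> n \<Longrightarrow> (\<chi> i j. if i = m \<and> j = n then c else of_bool (i = j)) \<in> G"
    and diagonals: "\<And>d. prod d UNIV = 1 \<Longrightarrow> diag_matrix d \<in> G"
  shows "SLn \<subseteq> G"
proof
  fix A :: "real^'n^'n"
  assume "A \<in> SLn"
  have "mat 1 \<in> SL_diagonal_products"
    using SL_diagonal_productsI[of "mat 1" "\<lambda>i. 1"] one_mem by (simp add: SLn_def)
  moreover have "\<forall>M\<in>SL_diagonal_products. M ** A \<in> SL_diagonal_products"
    using SL_diagonal_products_right_mult[OF transvections, of A] \<open>A \<in> SLn\<close> by (simp add: SLn_def)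
  ultimately have "mat 1 ** A \<in> SL_diagonal_products"
    by blast
  then obtain s d where "s \<in> G \<inter> SLn" and A: "A = s ** diag_matrix d"
    by (auto simp: SL_diagonal_products_def)
  then have "prod d UNIV = 1"
    using \<open>A \<in> SLn\<close> by (simp add: SLn_def det_mul det_diag_matrix)
  then show "A \<in> G"
    using \<open>s \<in> G \<inter> SLn\<close> by (simp add: A mult_mem diagonals)
qed

lemma plane_dilation_mem_of_nonconformal:
  assumes "g \<in> G" "\<not> conformal_matrix g"
  obtains u v r where "orthonormal_pair u v" "r > 0" "r \<noteq> 1" "plane_matrix u v r 0 0 (1/r) \<in> G"
proof -
  obtain x y u v r
    where xy: "orthonormal_pair x y" and uv: "orthonormal_pair u v" and r: "0 < r" "r < 1"
    and conj: "g ** plane_matrix x y 0 (- 1) 1 0 ** matrix_inv g = plane_matrix u v 0 (- (1/r)) r 0"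
    using nonconformal_conj_quarter_turn[OF invertible_mem[OF assms(1)] assms(2)] by blast
  have "g ** plane_rotation x y (pi/2) ** matrix_inv g \<in> G"
    using assms(1) plane_rotation_mem[OF xy] matrix_inv_mem[OF assms(1)] mult_mem by metis
  then have "plane_rotation u v (- (pi/2)) ** plane_matrix u v 0 (- (1/r)) r 0 \<in> G"
    using conj plane_rotation_mem[OF uv] mult_mem by (metis cos_pi_half sin_pi_half)
  then have "plane_matrix u v r 0 0 (1/r) \<in> G"
    by (simp add: plane_matrix_mult[OF uv])
  then show thesis
    using that uv r by simp
qed

lemma SLn_subset_of_nonconformal:
  assumes "g \<in> G" "\<not> conformal_matrix g"
  shows "SLn \<subseteq> G"
proof -
  obtain u v r where uv: "orthonormal_pair u v" and r: "r > 0" "r \<noteq> 1"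
    and dilation: "plane_matrix u v r 0 0 (1/r) \<in> G"
    using plane_dilation_mem_of_nonconformal[OF assms] by blast
  have "plane_matrix u v 1 c 0 1 \<in> G" for c
    using plane_shear_mem[OF uv r dilation] .
  then have shears: "plane_matrix (axis m 1) (axis n 1) 1 c 0 1 \<in> G" if "m \<noteq> n" for m n c
    using axis_shear_mem[OF uv] that by blast
  show ?thesis
  proof (rule SLn_subset_of_transvections)
    show "(\<chi> i j. if i = m \<and> j = n then c else of_bool (i = j)) \<in> G" if "m \<noteq> n" for m n c
      using shears[OF that] by (simp add: transvection_eq_plane_matrix[OF that])
    show "diag_matrix d \<in> G" if "prod d UNIV = 1" for d
    proof (rule diag_matrix_mem[OF _ that])
      show "diag_matrix (\<lambda>i. if i = m then t else if i = n then 1/t else 1) \<in> G"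
        if "m \<noteq> n" "t \<noteq> 0" for m n t
        using plane_dilation_mem_of_shears[OF axis_orthonormal_pair shears shears] that
        by (simp add: axis_dilation_eq_diag_matrix)
    qed
  qed
qed

end

section \<open>The embedding of \<open>\<real>\<^sup>*\<close> and the semidirect products\<close>

lemma emb_eq_diag_matrix:
  "(emb x :: real^('n::{finite,wellorder})^('n::{finite,wellorder})) =
     diag_matrix (\<lambda>i. (if i = first_index then sgn x else 1) * \<bar>x\<bar> powr (1 / real CARD('n)))"
  by (simp add: emb_def diag_matrix_def)

lemma det_emb: "det (emb x :: real^('n::{finite,wellorder})^('n::{finite,wellorder})) = x"
proof -
  have "(\<bar>x\<bar> powr (1 / real CARD('n))) ^ CARD('n) = \<bar>x\<bar>"
    by (cases "x = 0") (simp_all add: powr_realpow[symmetric] powr_powr)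
  then show ?thesis
    by (simp add: emb_eq_diag_matrix det_diag_matrix prod.distrib sgn_mult_abs)
qed

lemma emb_mult:
  "(emb (x * y) :: real^('n::{finite,wellorder})^('n::{finite,wellorder})) = emb x ** emb y"
  unfolding emb_eq_diag_matrix diag_matrix_mult
  by (rule arg_cong[where f = diag_matrix]) (auto simp: fun_eq_iff abs_mult powr_mult sgn_mult)

lemma emb_1 [simp]: "(emb 1 :: real^('n::{finite,wellorder})^('n::{finite,wellorder})) = mat 1"
  by (simp add: emb_eq_diag_matrix cong: if_cong)

lemma matrix_inv_emb:
  "x \<noteq> 0 \<Longrightarrow>
    matrix_inv (emb x :: real^('n::{finite,wellorder})^('n::{finite,wellorder})) = emb (inverse x)"
  by (rule matrix_inv_unique) (simp flip: emb_mult)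

lemma continuous_on_emb:
  "continuous_on (- {0}) (emb :: real \<Rightarrow> real^('n::{finite,wellorder})^('n::{finite,wellorder}))"
proof -
  have "continuous_on (- {0}) (\<lambda>x::real. x / \<bar>x\<bar>)"
    by (intro continuous_intros) auto
  moreover have "x / \<bar>x\<bar> = sgn x" for x :: real
    by (cases "x = 0") (auto simp: sgn_if)
  ultimately have "continuous_on (- {0}) (sgn :: real \<Rightarrow> real)"
    by simp
  moreover have "continuous_on (- {0}) (\<lambda>x::real. \<bar>x\<bar> powr (1 / real CARD('n)))"
    by (intro continuous_intros) auto
  ultimately have "continuous_on (- {0}) (\<lambda>x::real.
      if i = j then (if i = (first_index::'n) then sgn x else 1) * \<bar>x\<bar> powr (1 / real CARD('n))
      else 0)" for i j :: 'n
    by (cases "i = j"; cases "i = (first_index::'n)") (simp_all add: continuous_on_mult)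
  then show ?thesis
    unfolding emb_def by (intro continuous_on_vec_lambda)
qed

lemma is_subgroup_Rstar_emb_preimage:
  fixes G :: "(real^('n::{finite,wellorder})^('n::{finite,wellorder})) set"
  assumes "is_subgroup_GL G"
  shows "is_subgroup_Rstar {x. x \<noteq> 0 \<and> emb x \<in> G}"
  using assms
  by (auto simp: is_subgroup_GL_def is_subgroup_Rstar_def emb_mult matrix_inv_emb[symmetric])

lemma closedin_emb_preimage:
  fixes G :: "(real^('n::{finite,wellorder})^('n::{finite,wellorder})) set"
  assumes "closedin (top_of_set GLn) G"
  shows "closedin (top_of_set (- {0})) {x. x \<noteq> 0 \<and> emb x \<in> G}"
proof -
  obtain C where "closed C" and G: "G = GLn \<inter> C"
    using assms by (auto simp: closedin_closed)
  have "emb x \<in> GLn" if "x \<noteq> 0" for x :: real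
    using that by (simp add: GLn_def invertible_det_nz det_emb)
  then have "{x. x \<noteq> 0 \<and> emb x \<in> G} = - {0} \<inter> emb -` C"
    by (auto simp: G)
  then show ?thesis
    using continuous_closedin_preimage[OF continuous_on_emb \<open>closed C\<close>] by simp
qed

lemma semidir_eqI:
  fixes G K :: "(real^('n::{finite,wellorder})^('n::{finite,wellorder})) set"
  assumes G: "is_subgroup_GL G" and "K \<subseteq> G"
    and factor: "\<And>g. g \<in> G \<Longrightarrow> \<exists>k\<in>K. g = k ** emb (det g)"
  shows "G = semidir K {x. x \<noteq> 0 \<and> emb x \<in> G}"
proof
  show "semidir K {x. x \<noteq> 0 \<and> emb x \<in> G} \<subseteq> G"
    using G \<open>K \<subseteq> G\<close> by (auto simp: semidir_def is_subgroup_GL_def)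
  show "G \<subseteq> semidir K {x. x \<noteq> 0 \<and> emb x \<in> G}"
  proof
    fix g
    assume "g \<in> G"
    then obtain k where "k \<in> K" and g: "g = k ** emb (det g)"
      using factor by blast
    have "invertible g" "invertible k"
      using G \<open>g \<in> G\<close> \<open>k \<in> K\<close> \<open>K \<subseteq> G\<close> by (auto simp: is_subgroup_GL_def GLn_def)
    have "emb (det g) = matrix_inv k ** g"
      by (subst g) (simp add: matrix_mul_assoc matrix_inv_left \<open>invertible k\<close>)
    then have "emb (det g) \<in> G"
      using G \<open>g \<in> G\<close> \<open>k \<in> K\<close> \<open>K \<subseteq> G\<close> by (auto simp: is_subgroup_GL_def)
    then show "g \<in> semidir K {x. x \<noteq> 0 \<and> emb x \<in> G}"
      using \<open>k \<in> K\<close> g \<open>invertible g\<close> by (auto simp: semidir_def invertible_det_nz)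
  qed
qed

lemma SLn_factor:
  fixes g :: "real^('n::{finite,wellorder})^('n::{finite,wellorder})"
  assumes "invertible g"
  shows "\<exists>k\<in>SLn. g = k ** emb (det g)"
proof
  have "det g \<noteq> 0"
    using assms by (simp add: invertible_det_nz)
  then show "g ** emb (inverse (det g)) \<in> SLn"
    by (simp add: SLn_def det_mul det_emb)
  show "g = g ** emb (inverse (det g)) ** emb (det g)"
    using \<open>det g \<noteq> 0\<close> by (simp add: matrix_mul_assoc[symmetric] flip: emb_mult)
qed

lemma conformal_matrix_imp_scaled_orthogonal:
  fixes g :: "real^'n^'n"
  assumes "invertible g" "conformal_matrix g"
  obtains l q where "l > 0" "orthogonal_matrix q" "g = diag_matrix (\<lambda>_. l) ** q"
proof -
  obtain l where l: "\<And>x. norm (g *v x) = l * norm x"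
    using assms(2) by (auto simp: conformal_matrix_def)
  obtain k :: 'n where True
    by simp
  have "matrix_inv g *v (g *v axis k 1) = axis k 1"
    using assms(1) by (simp add: matrix_vector_mul_assoc matrix_inv_left)
  then have "g *v axis k 1 \<noteq> 0"
    by (metis axis_eq_0_iff matrix_vector_mult_0_right zero_neq_one)
  then have "l > 0"
    using l[of "axis k 1"] zero_less_norm_iff[of "g *v axis k 1"] by simp
  define q where "q = (1/l) *\<^sub>R g"
  have "norm (q *v x) = norm x" for x
    using l \<open>l > 0\<close> by (simp add: q_def flip: scaleR_matrix_vector_assoc)
  then have "orthogonal_matrix q"
    using orthogonal_transformation_matrix[of "(*v) q"]
    by (simp add: orthogonal_transformation)
  moreover have "g = diag_matrix (\<lambda>_. l) ** q"
    using \<open>l > 0\<close> by (simp add: q_def vec_eq_iff diag_matrix_mult_left)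
  ultimately show thesis
    using that \<open>l > 0\<close> by blast
qed

lemma scaled_orthogonal_factor:
  fixes q :: "real^('n::{finite,wellorder})^('n::{finite,wellorder})"
  assumes "l > 0" "orthogonal_matrix q"
  shows "\<exists>k\<in>SOn. diag_matrix (\<lambda>_. l) ** q = k ** emb (det (diag_matrix (\<lambda>_. l) ** q))"
proof
  define s where "s = det q"
  define J :: "real^('n::{finite,wellorder})^('n::{finite,wellorder})"
    where "J = diag_matrix (\<lambda>i. if i = first_index then s else 1)"
  have s: "s = 1 \<or> s = -1"
    unfolding s_def by (rule det_orthogonal_matrix[OF assms(2)])
  then have sq: "(\<lambda>i. (if i = first_index then s else 1) * (if i = first_index then s else 1))
      = (\<lambda>i. 1)"
    by auto
  have J: "orthogonal_matrix J" "det J = s" "J ** J = mat 1"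
    using s unfolding J_def diag_matrix_mult sq
    by (auto intro!: orthogonal_matrix_diag_sign simp: det_diag_matrix)
  have det: "det (diag_matrix (\<lambda>_. l) ** q) = l ^ CARD('n) * s"
    by (simp add: s_def det_mul det_diag_matrix)
  have "sgn (l ^ CARD('n) * s) = s" "\<bar>l ^ CARD('n) * s\<bar> powr (1 / real CARD('n)) = l"
    using s \<open>l > 0\<close> by (auto simp: sgn_mult abs_mult powr_realpow[symmetric] powr_powr)
  then have "emb (det (diag_matrix (\<lambda>_. l) ** q)) = J ** diag_matrix (\<lambda>_. l)"
    unfolding det by (simp add: emb_eq_diag_matrix J_def diag_matrix_mult cong: if_cong)
  moreover have "diag_matrix (\<lambda>_. l) ** q = q ** (J ** J) ** diag_matrix (\<lambda>_. l)"
    by (simp add: J vec_eq_iff diag_matrix_mult_left diag_matrix_mult_right)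
  ultimately show "diag_matrix (\<lambda>_. l) ** q = q ** J ** emb (det (diag_matrix (\<lambda>_. l) ** q))"
    by (simp add: matrix_mul_assoc)
  show "q ** J \<in> SOn"
    using assms(2) J s by (auto simp: SOn_def orthogonal_matrix_mul det_mul s_def)
qed

lemma conformal_factor:
  fixes g :: "real^('n::{finite,wellorder})^('n::{finite,wellorder})"
  assumes "invertible g" "conformal_matrix g"
  shows "\<exists>k\<in>SOn. g = k ** emb (det g)"
  using conformal_matrix_imp_scaled_orthogonal[OF assms] scaled_orthogonal_factor by metis

theorem mainTheorem4:
  fixes G :: "(real^('n::{finite,wellorder})^('n::{finite,wellorder})) set"
  assumes "is_subgroup_GL G"
    and "SOn \<subseteq> G"
  shows "\<exists>H. is_subgroup_Rstar H \<and>
           (G = semidir SOn H \<or> G = semidir SLn H) \<and>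
           (closedin (top_of_set GLn) G \<longrightarrow> closedin (top_of_set (- {0::real})) H)"
proof -
  interpret SOn_overgroup G
    using assms by unfold_locales
  have "G = semidir SOn {x. x \<noteq> 0 \<and> emb x \<in> G} \<or> G = semidir SLn {x. x \<noteq> 0 \<and> emb x \<in> G}"
  proof (cases "\<forall>g\<in>G. conformal_matrix g")
    case True
    then have "\<exists>k\<in>SOn. g = k ** emb (det g)" if "g \<in> G" for g
      using conformal_factor[OF invertible_mem[OF that]] that by blast
    then show ?thesis
      using assms by (intro disjI1 semidir_eqI) auto
  next
    case False
    then have "SLn \<subseteq> G"
      using SLn_subset_of_nonconformal by blast
    moreover have "\<exists>k\<in>SLn. g = k ** emb (det g)" if "g \<in> G" for g
      using SLn_factor[OF invertible_mem[OF that]] .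
    ultimately show ?thesis
      using assms by (intro disjI2 semidir_eqI) auto
  qed
  then show ?thesis
    using is_subgroup_Rstar_emb_preimage[OF assms(1)] closedin_emb_preimage by blast
qed

end
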